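(* Let $f$ be an almost distance function on a bi-complete connected Finsler manifold $M$ and let $p\in f^{-1}(\inf f,\sup f)$. Then there exist a neighborhood $V_p$ of $p$ and $\delta(p)>0$ such that, with $a_0:=f(p)-\tfrac12\delta(p)$ and $b_0:=f(p)+\tfrac12\delta(p)$, every $q\in V_p$ admits an $f$-geodesic $\gamma:[0,\delta(p)]\to M$ with either $\gamma(0)=q$ and $\gamma$ meeting ${}^{b_0}M_f$, or $\gamma(\delta(p))=q$ and $\gamma$ meeting $M_f^{a_0}$. In particular, for each $q\in V_p$, either $d(M_f^{a_0},q)=f(q)-a_0$ or $d(q,{}^{b_0}M_f)=b_0-f(q)$.
   Context: $(M,F)$ is a connected Finsler manifold with (possibly asymmetric) distance $d$; bi-complete means all forward Cauchy ($d(x_i,x_j)\to0$, $i<j$) and backward Cauchy ($d(x_j,x_i)\to0$, $i<j$) sequences converge. $f$ is 1-Lipschitz if $f(y)-f(x)\le d(x,y)$. An $f$-geodesic is a unit speed nonconstant geodesic $\gamma:I\to M$ with $f(\gamma(t))-f(\gamma(s))=t-s$. An almost distance function is a 1-Lipschitz $f$ such that for each $p\in f^{-1}(\inf f,\sup f)$ there are a neighborhood $U_p$ and $\delta(p)>0$ such that every $q\in U_p$ admits an $f$-geodesic $\gamma_q:[0,\delta(p)]\to M$ with $\gamma_q(0)=q$ or $\gamma_q(\delta(p))=q$. $M_f^a:=f^{-1}(-\infty,a]$, ${}^bM_f:=f^{-1}[b,\infty)$, $d(A,q):=\inf_{x\in A}d(x,q)$, $d(q,A):=\inf_{x\in A}d(q,x)$.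 *)

theory Defs
  imports "HOL-Analysis.Analysis"
begin

text \<open>Abstract (metric) model of a connected Finsler manifold with its
  possibly asymmetric distance d.\<close>

definition quasi_metric :: "('a \<Rightarrow> 'a \<Rightarrow> real) \<Rightarrow> bool" where
  "quasi_metric d \<longleftrightarrow>
     (\<forall>x y. 0 \<le> d x y) \<and> (\<forall>x. d x x = 0) \<and> (\<forall>x y. d x y = 0 \<longrightarrow> x = y) \<and>
     (\<forall>x y z. d x z \<le> d x y + d y z)"

text \<open>The manifold topology coincides with the topology of forward balls and
  with the topology of backward balls (as for every Finsler manifold).\<close>
definition finsler_topology :: "('a::topological_space \<Rightarrow> 'a \<Rightarrow> real) \<Rightarrow> bool" where
  "finsler_topology d \<longleftrightarrow>
     (\<forall>S. open S \<longleftrightarrow> (\<forall>x\<in>S. \<exists>e>0. \<forall>y. d x y < e \<longrightarrow> y \<in> S)) \<and>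
     (\<forall>S. open S \<longleftrightarrow> (\<forall>x\<in>S. \<exists>e>0. \<forall>y. d y x < e \<longrightarrow> y \<in> S))"

definition forward_cauchy :: "('a \<Rightarrow> 'a \<Rightarrow> real) \<Rightarrow> (nat \<Rightarrow> 'a) \<Rightarrow> bool" where
  "forward_cauchy d x \<longleftrightarrow> (\<forall>e>0. \<exists>N. \<forall>i j. N \<le> i \<longrightarrow> i < j \<longrightarrow> d (x i) (x j) < e)"

definition backward_cauchy :: "('a \<Rightarrow> 'a \<Rightarrow> real) \<Rightarrow> (nat \<Rightarrow> 'a) \<Rightarrow> bool" where
  "backward_cauchy d x \<longleftrightarrow> (\<forall>e>0. \<exists>N. \<forall>i j. N \<le> i \<longrightarrow> i < j \<longrightarrow> d (x j) (x i) < e)"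

definition bi_complete :: "('a::topological_space \<Rightarrow> 'a \<Rightarrow> real) \<Rightarrow> bool" where
  "bi_complete d \<longleftrightarrow>
     (\<forall>x. forward_cauchy d x \<longrightarrow> (\<exists>y. x \<longlonglongrightarrow> y)) \<and>
     (\<forall>x. backward_cauchy d x \<longrightarrow> (\<exists>y. x \<longlonglongrightarrow> y))"

definition finsler_space :: "('a::topological_space \<Rightarrow> 'a \<Rightarrow> real) \<Rightarrow> bool" where
  "finsler_space d \<longleftrightarrow> quasi_metric d \<and> finsler_topology d \<and> connected (UNIV :: 'a set)"

definition lipschitz1 :: "('a \<Rightarrow> 'a \<Rightarrow> real) \<Rightarrow> ('a \<Rightarrow> real) \<Rightarrow> bool" where
  "lipschitz1 d f \<longleftrightarrow> (\<forall>x y. f y - f x \<le> d x y)"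

definition unit_speed_geodesic ::
    "('a::topological_space \<Rightarrow> 'a \<Rightarrow> real) \<Rightarrow> (real \<Rightarrow> 'a) \<Rightarrow> real set \<Rightarrow> bool" where
  "unit_speed_geodesic d \<gamma> I \<longleftrightarrow>
     is_interval I \<and> (\<exists>s\<in>I. \<exists>t\<in>I. s < t) \<and> continuous_on I \<gamma> \<and>
     (\<forall>t\<in>I. \<exists>e>0. \<forall>s\<in>I. \<forall>u\<in>I. t - e \<le> s \<longrightarrow> s \<le> u \<longrightarrow> u \<le> t + e \<longrightarrow>
        d (\<gamma> s) (\<gamma> u) = u - s)"

definition f_geodesic ::
    "('a::topological_space \<Rightarrow> 'a \<Rightarrow> real) \<Rightarrow> ('a \<Rightarrow> real) \<Rightarrow> (real \<Rightarrow> 'a) \<Rightarrow> real set \<Rightarrow> bool" where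
  "f_geodesic d f \<gamma> I \<longleftrightarrow>
     unit_speed_geodesic d \<gamma> I \<and> (\<forall>s\<in>I. \<forall>t\<in>I. f (\<gamma> t) - f (\<gamma> s) = t - s)"

definition nbhd :: "'a::topological_space set \<Rightarrow> 'a \<Rightarrow> bool" where
  "nbhd V p \<longleftrightarrow> (\<exists>U. open U \<and> p \<in> U \<and> U \<subseteq> V)"

definition in_open_range :: "('a \<Rightarrow> real) \<Rightarrow> 'a \<Rightarrow> bool" where
  "in_open_range f p \<longleftrightarrow> (\<exists>x. f x < f p) \<and> (\<exists>x. f p < f x)"

definition almost_distance_function ::
    "('a::topological_space \<Rightarrow> 'a \<Rightarrow> real) \<Rightarrow> ('a \<Rightarrow> real) \<Rightarrow> bool" where
  "almost_distance_function d f \<longleftrightarrow> lipschitz1 d f \<and>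
     (\<forall>p. in_open_range f p \<longrightarrow> (\<exists>U \<delta>. nbhd U p \<and> \<delta> > 0 \<and>
        (\<forall>q\<in>U. \<exists>\<gamma>. f_geodesic d f \<gamma> {0..\<delta>} \<and> (\<gamma> 0 = q \<or> \<gamma> \<delta> = q))))"

definition sublevel :: "('a \<Rightarrow> real) \<Rightarrow> real \<Rightarrow> 'a set" where
  "sublevel f a = {x. f x \<le> a}"

definition superlevel :: "('a \<Rightarrow> real) \<Rightarrow> real \<Rightarrow> 'a set" where
  "superlevel f b = {x. b \<le> f x}"

definition set_dist_to :: "('a \<Rightarrow> 'a \<Rightarrow> real) \<Rightarrow> 'a set \<Rightarrow> 'a \<Rightarrow> real" where
  "set_dist_to d A q = (INF x\<in>A. d x q)"

definition dist_to_set :: "('a \<Rightarrow> 'a \<Rightarrow> real) \<Rightarrow> 'a \<Rightarrow> 'a set \<Rightarrow> real" where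
  "dist_to_set d q A = (INF x\<in>A. d q x)"

end

theory Submission
  imports Defs
begin

text \<open>The neighbourhood and \<open>\<delta>\<close> are those of the definition of an almost distance
  function, shrunk so that \<open>a\<^sub>0 < f < b\<^sub>0\<close> on it; this is possible because a 1-Lipschitz
  function is continuous for the Finsler topology. Along an \<open>f\<close>-geodesic \<open>f\<close> grows with unit
  speed, so a geodesic starting at \<open>q\<close> reaches the level \<open>b\<^sub>0\<close> at time \<open>b\<^sub>0 - f q \<le> \<delta>\<close>, and one
  ending at \<open>q\<close> passes the level \<open>a\<^sub>0\<close> at time \<open>\<delta> - (f q - a\<^sub>0)\<close>. A unit speed geodesic does
  not increase distances of parameters, so that point is within \<open>b\<^sub>0 - f q\<close> (resp. \<open>f q - a\<^sub>0\<close>)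
  of \<open>q\<close>, whereas the Lipschitz bound on \<open>f\<close> keeps every point of the level set at least
  that far away.\<close>

lemma open_strict_sublevel:
  assumes "finsler_topology d" "lipschitz1 d f"
  shows "open {x. f x < c}"
proof -
  have "\<exists>e>0. \<forall>y. d x y < e \<longrightarrow> y \<in> {x. f x < c}" if "x \<in> {x. f x < c}" for x
  proof (intro exI[of _ "c - f x"] conjI allI impI)
    fix y assume "d x y < c - f x"
    moreover have "f y - f x \<le> d x y" using assms(2) unfolding lipschitz1_def by blast
    ultimately show "y \<in> {x. f x < c}" by simp
  qed (use that in simp)
  moreover have "\<forall>S. open S \<longleftrightarrow> (\<forall>x\<in>S. \<exists>e>0. \<forall>y. d x y < e \<longrightarrow> y \<in> S)"
    using assms(1) unfolding finsler_topology_def by (rule conjunct1)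
  ultimately show ?thesis by blast
qed

lemma open_strict_superlevel:
  assumes "finsler_topology d" "lipschitz1 d f"
  shows "open {x. c < f x}"
proof -
  have "\<exists>e>0. \<forall>y. d y x < e \<longrightarrow> y \<in> {x. c < f x}" if "x \<in> {x. c < f x}" for x
  proof (intro exI[of _ "f x - c"] conjI allI impI)
    fix y assume "d y x < f x - c"
    moreover have "f x - f y \<le> d y x" using assms(2) unfolding lipschitz1_def by blast
    ultimately show "y \<in> {x. c < f x}" by simp
  qed (use that in simp)
  moreover have "\<forall>S. open S \<longleftrightarrow> (\<forall>x\<in>S. \<exists>e>0. \<forall>y. d y x < e \<longrightarrow> y \<in> S)"
    using assms(1) unfolding finsler_topology_def by (rule conjunct2)
  ultimately show ?thesis by blast
qed

text \<open>The defining property of a unit speed geodesic is only local; Bolzano's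
  bisection principle together with the triangle inequality globalises it.\<close>

lemma unit_speed_geodesic_dist_le:
  assumes "quasi_metric d" "unit_speed_geodesic d \<gamma> I"
    and "a \<in> I" "b \<in> I" "a \<le> b"
  shows "d (\<gamma> a) (\<gamma> b) \<le> b - a"
proof -
  have triangle: "\<forall>x y z. d x z \<le> d x y + d y z"
    using assms(1) unfolding quasi_metric_def by blast
  have I: "is_interval I"
    and locally: "\<And>t. t \<in> I \<Longrightarrow> \<exists>e>0. \<forall>s\<in>I. \<forall>u\<in>I.
                    t - e \<le> s \<longrightarrow> s \<le> u \<longrightarrow> u \<le> t + e \<longrightarrow> d (\<gamma> s) (\<gamma> u) = u - s"
    using assms(2) unfolding unit_speed_geodesic_def by blast+
  have between: "x \<in> I" if "a \<le> x" "x \<le> b" for x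
    using mem_is_interval_1_I[OF I assms(3,4)] that by blast
  have "a \<le> a \<longrightarrow> b \<le> b \<longrightarrow> d (\<gamma> a) (\<gamma> b) \<le> b - a"
    using assms(5)
  proof (induction rule: Bolzano[where
        P = "\<lambda>s u. a \<le> s \<longrightarrow> u \<le> b \<longrightarrow> d (\<gamma> s) (\<gamma> u) \<le> u - s"])
    case (trans s t u)
    show ?case
    proof (intro impI)
      assume "a \<le> s" "u \<le> b"
      with trans have "d (\<gamma> s) (\<gamma> t) \<le> t - s" "d (\<gamma> t) (\<gamma> u) \<le> u - t" by auto
      then show "d (\<gamma> s) (\<gamma> u) \<le> u - s"
        using triangle[rule_format, of "\<gamma> s" "\<gamma> u" "\<gamma> t"] by linarith
    qed
  next
    case (local t)
    then obtain e where "e > 0" and e: "\<forall>s\<in>I. \<forall>u\<in>I.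
        t - e \<le> s \<longrightarrow> s \<le> u \<longrightarrow> u \<le> t + e \<longrightarrow> d (\<gamma> s) (\<gamma> u) = u - s"
      using locally between by blast
    have "d (\<gamma> s) (\<gamma> u) \<le> u - s"
      if "s \<le> t" "t \<le> u" "u - s < e" "a \<le> s" "u \<le> b" for s u
    proof -
      have "s \<in> I" "u \<in> I" using between[of s] between[of u] local that by auto
      then show ?thesis using e that by auto
    qed
    then show ?case using \<open>e > 0\<close> by blast
  qed
  then show ?thesis by simp
qed

lemma f_geodesic_value:
  assumes "f_geodesic d f \<gamma> I" "s \<in> I" "t \<in> I"
  shows "f (\<gamma> t) = f (\<gamma> s) + (t - s)"
  using assms unfolding f_geodesic_def by force

lemma dist_to_superlevel_eq:
  assumes "lipschitz1 d f" "b \<le> f y" "d q y \<le> b - f q"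
  shows "dist_to_set d q (superlevel f b) = b - f q"
  unfolding dist_to_set_def
proof (rule antisym)
  have lower: "b - f q \<le> d q x" if "x \<in> superlevel f b" for x
  proof -
    have "f x - f q \<le> d q x" using assms(1) unfolding lipschitz1_def by blast
    then show ?thesis using that unfolding superlevel_def by simp
  qed
  have "y \<in> superlevel f b" using assms(2) unfolding superlevel_def by simp
  then show "b - f q \<le> (INF x\<in>superlevel f b. d q x)"
    using lower by (intro cINF_greatest) auto
  have "(INF x\<in>superlevel f b. d q x) \<le> d q y"
    using \<open>y \<in> superlevel f b\<close> lower by (intro cINF_lower bdd_belowI2)
  then show "(INF x\<in>superlevel f b. d q x) \<le> b - f q" using assms(3) by linarith
qed

lemma set_dist_from_sublevel_eq:
  assumes "lipschitz1 d f" "f y \<le> a" "d y q \<le> f q - a"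
  shows "set_dist_to d (sublevel f a) q = f q - a"
  unfolding set_dist_to_def
proof (rule antisym)
  have lower: "f q - a \<le> d x q" if "x \<in> sublevel f a" for x
  proof -
    have "f q - f x \<le> d x q" using assms(1) unfolding lipschitz1_def by blast
    then show ?thesis using that unfolding sublevel_def by simp
  qed
  have "y \<in> sublevel f a" using assms(2) unfolding sublevel_def by simp
  then show "f q - a \<le> (INF x\<in>sublevel f a. d x q)"
    using lower by (intro cINF_greatest) auto
  have "(INF x\<in>sublevel f a. d x q) \<le> d y q"
    using \<open>y \<in> sublevel f a\<close> lower by (intro cINF_lower bdd_belowI2)
  then show "(INF x\<in>sublevel f a. d x q) \<le> f q - a" using assms(3) by linarith
qed

lemma f_geodesic_from_reaches_superlevel:
  assumes "quasi_metric d" "lipschitz1 d f" "f_geodesic d f \<gamma> {0..\<delta>}"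
    and "\<gamma> 0 = q" "f q \<le> b" "b \<le> f q + \<delta>"
  shows "(\<exists>t\<in>{0..\<delta>}. \<gamma> t \<in> superlevel f b) \<and> dist_to_set d q (superlevel f b) = b - f q"
proof -
  define t where "t = b - f q"
  have t: "t \<in> {0..\<delta>}" and start: "0 \<in> {0..\<delta>}" using assms(5,6) by (auto simp: t_def)
  have geodesic: "unit_speed_geodesic d \<gamma> {0..\<delta>}"
    using assms(3) unfolding f_geodesic_def by blast
  have "f (\<gamma> t) = b"
    using f_geodesic_value[OF assms(3) start t] assms(4) by (simp add: t_def)
  moreover have "d q (\<gamma> t) \<le> b - f q"
    using unit_speed_geodesic_dist_le[OF assms(1) geodesic start t] t assms(4) by (simp add: t_def)
  ultimately show ?thesis
    using t dist_to_superlevel_eq[OF assms(2), of b "\<gamma> t" q] by (auto simp: superlevel_def)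
qed

lemma f_geodesic_to_meets_sublevel:
  assumes "quasi_metric d" "lipschitz1 d f" "f_geodesic d f \<gamma> {0..\<delta>}"
    and "\<gamma> \<delta> = q" "a \<le> f q" "f q \<le> a + \<delta>"
  shows "(\<exists>t\<in>{0..\<delta>}. \<gamma> t \<in> sublevel f a) \<and> set_dist_to d (sublevel f a) q = f q - a"
proof -
  define t where "t = \<delta> - (f q - a)"
  have t: "t \<in> {0..\<delta>}" and stop: "\<delta> \<in> {0..\<delta>}" using assms(5,6) by (auto simp: t_def)
  have geodesic: "unit_speed_geodesic d \<gamma> {0..\<delta>}"
    using assms(3) unfolding f_geodesic_def by blast
  have "f (\<gamma> t) = a"
    using f_geodesic_value[OF assms(3) stop t] assms(4) by (simp add: t_def)
  moreover have "d (\<gamma> t) q \<le> f q - a"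
    using unit_speed_geodesic_dist_le[OF assms(1) geodesic t stop] t assms(4) by (simp add: t_def)
  ultimately show ?thesis
    using t set_dist_from_sublevel_eq[OF assms(2), of "\<gamma> t" a q] by (auto simp: sublevel_def)
qed

lemma nbhd_Int_level_band:
  assumes "finsler_topology d" "lipschitz1 d f" "nbhd U p" "a < f p" "f p < b"
  shows "nbhd (U \<inter> {x. a < f x} \<inter> {x. f x < b}) p"
proof -
  obtain W where "open W" "p \<in> W" "W \<subseteq> U" using assms(3) unfolding nbhd_def by blast
  moreover have "open (W \<inter> {x. a < f x} \<inter> {x. f x < b})"
    using \<open>open W\<close> open_strict_superlevel[OF assms(1,2)] open_strict_sublevel[OF assms(1,2)]
    by (intro open_Int)
  ultimately show ?thesis using assms(4,5) unfolding nbhd_def by blast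
qed

lemma f_geodesic_reaches_level_set:
  assumes "quasi_metric d" "lipschitz1 d f" "f_geodesic d f \<gamma> {0..\<delta>}"
    and "\<gamma> 0 = q \<or> \<gamma> \<delta> = q" "a \<le> f q" "f q \<le> b" "b \<le> a + \<delta>"
  shows "(\<gamma> 0 = q \<and> (\<exists>t\<in>{0..\<delta>}. \<gamma> t \<in> superlevel f b) \<and>
            dist_to_set d q (superlevel f b) = b - f q) \<or>
         (\<gamma> \<delta> = q \<and> (\<exists>t\<in>{0..\<delta>}. \<gamma> t \<in> sublevel f a) \<and>
            set_dist_to d (sublevel f a) q = f q - a)"
  using assms(4)
proof
  assume "\<gamma> 0 = q"
  moreover have "b \<le> f q + \<delta>" using assms(5,7) by linarith
  ultimately show ?thesis
    using f_geodesic_from_reaches_superlevel[OF assms(1-3) \<open>\<gamma> 0 = q\<close> assms(6)] by blast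
next
  assume "\<gamma> \<delta> = q"
  moreover have "f q \<le> a + \<delta>" using assms(6,7) by linarith
  ultimately show ?thesis
    using f_geodesic_to_meets_sublevel[OF assms(1-3) \<open>\<gamma> \<delta> = q\<close> assms(5)] by blast
qed

theorem lemma5:
  fixes d :: "'a::topological_space \<Rightarrow> 'a \<Rightarrow> real" and f :: "'a \<Rightarrow> real" and p :: 'a
  assumes "finsler_space d" and "bi_complete d"
    and "almost_distance_function d f"
    and "in_open_range f p"
  shows "\<exists>V \<delta>. nbhd V p \<and> \<delta> > 0 \<and>
    (let a0 = f p - \<delta> / 2; b0 = f p + \<delta> / 2 in
      (\<forall>q\<in>V. \<exists>\<gamma>. f_geodesic d f \<gamma> {0..\<delta>} \<and>
         ((\<gamma> 0 = q \<and> (\<exists>t\<in>{0..\<delta>}. \<gamma> t \<in> superlevel f b0)) \<or>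
          (\<gamma> \<delta> = q \<and> (\<exists>t\<in>{0..\<delta>}. \<gamma> t \<in> sublevel f a0)))) \<and>
      (\<forall>q\<in>V. set_dist_to d (sublevel f a0) q = f q - a0 \<or>
              dist_to_set d q (superlevel f b0) = b0 - f q))"
proof -
  have qm: "quasi_metric d" and top: "finsler_topology d" and lip: "lipschitz1 d f"
    using assms(1,3) unfolding finsler_space_def almost_distance_function_def by auto
  obtain U \<delta> where "nbhd U p" "\<delta> > 0"
    and geodesic: "\<forall>q\<in>U. \<exists>\<gamma>. f_geodesic d f \<gamma> {0..\<delta>} \<and> (\<gamma> 0 = q \<or> \<gamma> \<delta> = q)"
    using assms(3,4) unfolding almost_distance_function_def by blast
  define a0 b0 where "a0 = f p - \<delta> / 2" and "b0 = f p + \<delta> / 2"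
  define V where "V = U \<inter> {x. a0 < f x} \<inter> {x. f x < b0}"
  have "nbhd V p"
    unfolding V_def using \<open>\<delta> > 0\<close>
    by (intro nbhd_Int_level_band[OF top lip \<open>nbhd U p\<close>]) (auto simp: a0_def b0_def)
  have reach: "\<exists>\<gamma>. f_geodesic d f \<gamma> {0..\<delta>} \<and>
      ((\<gamma> 0 = q \<and> (\<exists>t\<in>{0..\<delta>}. \<gamma> t \<in> superlevel f b0) \<and>
          dist_to_set d q (superlevel f b0) = b0 - f q) \<or>
       (\<gamma> \<delta> = q \<and> (\<exists>t\<in>{0..\<delta>}. \<gamma> t \<in> sublevel f a0) \<and>
          set_dist_to d (sublevel f a0) q = f q - a0))" if "q \<in> V" for q
  proof -
    have "q \<in> U" "a0 \<le> f q" "f q \<le> b0" using that unfolding V_def by auto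
    moreover have "b0 \<le> a0 + \<delta>" unfolding a0_def b0_def by simp
    moreover obtain \<gamma> where \<gamma>: "f_geodesic d f \<gamma> {0..\<delta>}" "\<gamma> 0 = q \<or> \<gamma> \<delta> = q"
      using geodesic \<open>q \<in> U\<close> by blast
    ultimately show ?thesis using f_geodesic_reaches_level_set[OF qm lip \<gamma>] by blast
  qed
  show ?thesis
    by (intro exI[of _ V] exI[of _ \<delta>], unfold Let_def a0_def[symmetric] b0_def[symmetric],
        intro conjI ballI) (fact | blast dest: reach)+
qed

end
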